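(* Suppose $F$ is a $\mu$-PL function for some $\mu>0$. Let $b\le n$, let $m\ge1$ be an integer, and let $\eta=\rho/L$ where $0<\rho\le 1/5$ satisfies $$\frac{4\rho^2m^2}{b}+\rho\le 1,$$ and let $T=\lceil 6L/(\rho\mu)\rceil$. Then for every integer $K\ge 1$, the output $x^K$ of PL-SVRG$(x^0,K,T,m,b,\eta)$ satisfies $$\mathbb E\big[F(x^K)-F(x^* )\big]\le \frac{F(x^0)-F(x^* )}{2^K},$$ where $x^*$ is an optimal solution of $\min_x F(x)$.
   Context: Setting: Let $n,d\ge 1$ be integers and $[n]=\{1,\dots,n\}$. Let $f_1,\dots,f_n:\mathbb R^d\to\mathbb R$ be differentiable (possibly nonconvex) functions, each $L$-smooth for some $L>0$, i.e. $\|\nabla f_i(x)-\nabla f_i(y)\|\le L\|x-y\|$ for all $x,y\in\mathbb R^d$ and $i\in[n]$. Let $f=\frac1n\sum_{i=1}^n f_i$. Let $h:\mathbb R^d\to\mathbb R\cup\{+\infty\}$ be proper, lower semicontinuous and convex, with closed domain. Let $F=f+h$, and let $x^*$ be a global minimizer of $F$ on $\mathbb R^d$ (assumed to exist). For $\eta>0$, $\mathrm{prox}_{\eta h}(x):=\arg\min_{y\in\mathbb R^d}\big(h(y)+\frac1{2\eta}\|y-x\|^2\big)$. $\mu$-PL functions: for $x\in\mathbb R^d$ and $\alpha>0$ define $D_h(x,\alpha):=-2\alpha\min_{y\in\mathbb R^d}\big[\langle\nabla f(x),y-x\rangle+\frac{\alpha}{2}\|y-x\|^2+h(y)-h(x)\big]$.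 $F$ is called $\mu$-PL ($\mu>0$) if $\mu\,(F(x)-F(x^* ))\le \frac12 D_h(x,\mu)$ for all $x\in\mathrm{dom}(h)$. Algorithm ProxSVRG$(x^0,T,m,b,\eta)$: Given $x^0\in\mathbb R^d$, positive integers $T,m,b$ and $\eta>0$, let $S=\lceil T/m\rceil$ and set $\tilde x^0=x^0_m=x^0$. For $s=0,\dots,S-1$: set $x^{s+1}_0=x^s_m$ and $g^{s+1}=\frac1n\sum_{i=1}^n\nabla f_i(\tilde x^s)$; for $t=0,\dots,m-1$: draw a multiset $I_t$ of $b$ indices, each drawn independently and uniformly at random from $[n]$ (with replacement, independently of all previous draws), set $v^{s+1}_t=\frac1b\sum_{i\in I_t}\big(\nabla f_i(x^{s+1}_t)-\nabla f_i(\tilde x^s)\big)+g^{s+1}$ and $x^{s+1}_{t+1}=\mathrm{prox}_{\eta h}(x^{s+1}_t-\eta v^{s+1}_t)$; after the inner loop set $\tilde x^{s+1}=x^{s+1}_m$. The output $x_a$ is chosen uniformly at random from $\{x^{s+1}_t: 0\le t\le m-1,\ 0\le s\le S-1\}$. Algorithm PL-SVRG$(x^0,K,T,m,b,\eta)$: for $k=1,\dots,K$, let $x^k$ be the output $x_a$ of ProxSVRG$(x^{k-1},T,m,b,\eta)$ (run with fresh independent randomness); output $x^K$. Expectations are over all randomness. *)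

theory Defs
  imports "HOL-Analysis.Analysis" "HOL-Probability.Probability"
begin

text \<open>Component functions f_i (i < n), with gradients gf i; index set [n] is rendered as {..<n}.
  The extended-real function h is rendered by a real function h together with its effective
  domain D (h = +infinity outside D).\<close>

definition avg_fun :: "nat \<Rightarrow> (nat \<Rightarrow> 'a \<Rightarrow> real) \<Rightarrow> 'a \<Rightarrow> real" where
  "avg_fun n fs x = (1 / real n) * (\<Sum>i<n. fs i x)"

definition avg_grad :: "nat \<Rightarrow> (nat \<Rightarrow> 'a \<Rightarrow> 'a::real_vector) \<Rightarrow> 'a \<Rightarrow> 'a" where
  "avg_grad n gf x = (1 / real n) *\<^sub>R (\<Sum>i<n. gf i x)"

definition prox :: "('a::real_normed_vector \<Rightarrow> real) \<Rightarrow> 'a set \<Rightarrow> real \<Rightarrow> 'a \<Rightarrow> 'a" where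
  "prox h D \<eta> x = (ARG_MIN (\<lambda>y. h y + (norm (y - x))^2 / (2 * \<eta>)) y. y \<in> D)"

definition Dh :: "('a::real_inner \<Rightarrow> 'a) \<Rightarrow> ('a \<Rightarrow> real) \<Rightarrow> 'a set \<Rightarrow> 'a \<Rightarrow> real \<Rightarrow> real" where
  "Dh gradf h D x \<alpha> = - 2 * \<alpha> *
     (INF y\<in>D. gradf x \<bullet> (y - x) + \<alpha> / 2 * (norm (y - x))^2 + h y - h x)"

definition is_PL :: "real \<Rightarrow> ('a::real_inner \<Rightarrow> real) \<Rightarrow> ('a \<Rightarrow> 'a) \<Rightarrow> ('a \<Rightarrow> real) \<Rightarrow> 'a set \<Rightarrow> 'a \<Rightarrow> bool" where
  "is_PL \<mu> f gradf h D xstar \<longleftrightarrow> \<mu> > 0 \<and>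
     (\<forall>x\<in>D. \<mu> * ((f x + h x) - (f xstar + h xstar)) \<le> 1/2 * Dh gradf h D x \<mu>)"

text \<open>A multiset of b indices drawn i.i.d. uniformly from {..<n} with replacement,
  represented as a uniformly random list of length b (uniform on {..<n}^b = i.i.d. uniform).\<close>
definition sample_indices :: "nat \<Rightarrow> nat \<Rightarrow> nat list pmf" where
  "sample_indices n b = pmf_of_set {xs. set xs \<subseteq> {..<n} \<and> length xs = b}"

definition svrg_step ::
  "nat \<Rightarrow> (nat \<Rightarrow> 'a \<Rightarrow> 'a::real_normed_vector) \<Rightarrow> ('a \<Rightarrow> real) \<Rightarrow> 'a set \<Rightarrow> nat \<Rightarrow> real
    \<Rightarrow> 'a \<Rightarrow> 'a \<Rightarrow> 'a \<Rightarrow> nat list \<Rightarrow> 'a" where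
  "svrg_step n gf h D b \<eta> xtilde g xt I =
     (let v = (1 / real b) *\<^sub>R (\<Sum>i\<leftarrow>I. gf i xt - gf i xtilde) + g
      in prox h D \<eta> (xt - \<eta> *\<^sub>R v))"

fun svrg_inner ::
  "nat \<Rightarrow> (nat \<Rightarrow> 'a \<Rightarrow> 'a::real_normed_vector) \<Rightarrow> ('a \<Rightarrow> real) \<Rightarrow> 'a set \<Rightarrow> nat \<Rightarrow> real
    \<Rightarrow> 'a \<Rightarrow> 'a \<Rightarrow> nat \<Rightarrow> 'a \<Rightarrow> 'a list pmf" where
  "svrg_inner n gf h D b \<eta> xtilde g 0 x = return_pmf [x]"
| "svrg_inner n gf h D b \<eta> xtilde g (Suc k) x =
     bind_pmf (sample_indices n b) (\<lambda>I.
     bind_pmf (svrg_inner n gf h D b \<eta> xtilde g k (svrg_step n gf h D b \<eta> xtilde g x I)) (\<lambda>xs.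
     return_pmf (x # xs)))"

text \<open>Outer loop with s remaining epochs starting from x = x^{s+1}_0 = tilde x^s; returns the list
  of all points x^{s+1}_t, 0 <= t <= m-1, over the remaining epochs.\<close>
fun svrg_outer ::
  "nat \<Rightarrow> (nat \<Rightarrow> 'a \<Rightarrow> 'a::real_normed_vector) \<Rightarrow> ('a \<Rightarrow> real) \<Rightarrow> 'a set \<Rightarrow> nat \<Rightarrow> real
    \<Rightarrow> nat \<Rightarrow> nat \<Rightarrow> 'a \<Rightarrow> 'a list pmf" where
  "svrg_outer n gf h D b \<eta> m 0 x = return_pmf []"
| "svrg_outer n gf h D b \<eta> m (Suc s) x =
     bind_pmf (svrg_inner n gf h D b \<eta> x (avg_grad n gf x) m x) (\<lambda>xs.
     bind_pmf (svrg_outer n gf h D b \<eta> m s (last xs)) (\<lambda>rest.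
     return_pmf (take m xs @ rest)))"

definition ProxSVRG ::
  "nat \<Rightarrow> (nat \<Rightarrow> 'a \<Rightarrow> 'a::real_normed_vector) \<Rightarrow> ('a \<Rightarrow> real) \<Rightarrow> 'a set
    \<Rightarrow> 'a \<Rightarrow> nat \<Rightarrow> nat \<Rightarrow> nat \<Rightarrow> real \<Rightarrow> 'a pmf" where
  "ProxSVRG n gf h D x0 T m b \<eta> =
     bind_pmf (svrg_outer n gf h D b \<eta> m (nat \<lceil>real T / real m\<rceil>) x0) (\<lambda>pts.
       map_pmf (\<lambda>j. pts ! j) (pmf_of_set {..<length pts}))"

fun PL_SVRG ::
  "nat \<Rightarrow> (nat \<Rightarrow> 'a \<Rightarrow> 'a::real_normed_vector) \<Rightarrow> ('a \<Rightarrow> real) \<Rightarrow> 'a set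
    \<Rightarrow> 'a \<Rightarrow> nat \<Rightarrow> nat \<Rightarrow> nat \<Rightarrow> nat \<Rightarrow> real \<Rightarrow> 'a pmf" where
  "PL_SVRG n gf h D x0 0 T m b \<eta> = return_pmf x0"
| "PL_SVRG n gf h D x0 (Suc k) T m b \<eta> =
     bind_pmf (PL_SVRG n gf h D x0 k T m b \<eta>) (\<lambda>y. ProxSVRG n gf h D y T m b \<eta>)"

end

theory Submission
  imports Defs
begin

text \<open>
  Write \<open>G\<^sub>\<eta>(x)\<close> for the decrease of the proximal-linear model
  \<open>y \<mapsto> h y + \<langle>\<nabla>f x, y - x\<rangle> + \<parallel>y - x\<parallel>\<^sup>2 / (2\<eta>)\<close> achieved by its minimiser, the
  proximal-gradient point. The PL inequality (with convexity of \<open>h\<close>) bounds the suboptimality of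
  every point by \<open>c G\<^sub>\<eta>(x)\<close> with \<open>c = 1 / (\<eta>\<mu>)\<close>. In one epoch of ProxSVRG, each step
  decreases \<open>F\<close> in expectation by \<open>G\<^sub>\<eta>\<close> of the current point, up to the variance of the
  minibatch gradient, which is at most \<open>L\<^sup>2/b\<close> times the squared distance to the snapshot; the
  step-size condition lets the quadratic terms of the descent pay for this drift. Hence the values
  of \<open>G\<^sub>\<eta>\<close> at all \<open>S m\<close> collected points sum in expectation to at most \<open>F(x\<^sub>0) - F(x\<^sup>*)\<close>,
  and the uniformly chosen output has expected gap at most \<open>c/(S m) \<le> c/T \<le> 1/6\<close> of the
  initial one. Each of the \<open>K\<close> restarts therefore at least halves the expected gap.
\<close>

section \<open>Elementary inequalities\<close>

lemma norm_add_power2: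
  fixes x y :: "'a::real_inner"
  shows "(norm (x + y))\<^sup>2 = (norm x)\<^sup>2 + (norm y)\<^sup>2 + 2 * (x \<bullet> y)"
  unfolding power2_norm_eq_inner by (simp add: inner_add_left inner_add_right inner_commute[of y x])

lemma young_inner:
  fixes x y :: "'a::real_inner"
  assumes "\<eta> > 0"
  shows "x \<bullet> y \<le> \<eta> / 2 * (norm x)\<^sup>2 + (norm y)\<^sup>2 / (2 * \<eta>)"
proof -
  have "0 \<le> (norm (\<eta> *\<^sub>R x - y))\<^sup>2 / (2 * \<eta>)" using assms by simp
  also have "\<dots> = \<eta> / 2 * (norm x)\<^sup>2 + (norm y)\<^sup>2 / (2 * \<eta>) - x \<bullet> y"
    using norm_add_power2[of "\<eta> *\<^sub>R x" "- y"] assms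
    by (simp add: power_mult_distrib field_simps power2_eq_square)
  finally show ?thesis by simp
qed

lemma norm_add_power2_weighted_le:
  fixes p q :: "'a::real_inner"
  shows "2 * real k * (norm (p + q))\<^sup>2 \<le> 2 * real k * (2 * real k + 1) * (norm p)\<^sup>2 + (2 * real k + 1) * (norm q)\<^sup>2"
proof -
  have "(norm ((2 * real k) *\<^sub>R p - q))\<^sup>2 = 4 * (real k)\<^sup>2 * (norm p)\<^sup>2 + (norm q)\<^sup>2 - 4 * real k * (p \<bullet> q)"
    using norm_add_power2[of "(2 * real k) *\<^sub>R p" "- q"] by (simp add: power_mult_distrib)
  then have "4 * real k * (p \<bullet> q) \<le> 4 * (real k)\<^sup>2 * (norm p)\<^sup>2 + (norm q)\<^sup>2"
    using zero_le_power2[of "norm ((2 * real k) *\<^sub>R p - q)"] by linarith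
  then show ?thesis
    unfolding norm_add_power2 by (simp add: algebra_simps power2_eq_square)
qed

lemma nonneg_if_nonneg_add_small_mult:
  fixes a c :: real
  assumes "c \<ge> 0" and small: "\<And>s. 0 < s \<Longrightarrow> s \<le> 1 \<Longrightarrow> 0 \<le> a + s * c"
  shows "0 \<le> a"
proof (rule ccontr)
  assume "\<not> 0 \<le> a"
  define s where "s = min 1 (- a / (2 * c + 1))"
  have "0 < s" "s \<le> 1"
    using \<open>\<not> 0 \<le> a\<close> \<open>c \<ge> 0\<close> by (auto simp: s_def divide_neg_pos)
  moreover have "s * c \<le> - a / (2 * c + 1) * c"
    using \<open>c \<ge> 0\<close> by (intro mult_right_mono) (auto simp: s_def)
  moreover have "- a / (2 * c + 1) * c \<le> - a / 2"
    using \<open>\<not> 0 \<le> a\<close> \<open>c \<ge> 0\<close> by (simp add: field_simps)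
  ultimately show False using small[of s] \<open>\<not> 0 \<le> a\<close> by linarith
qed

lemma descent_lemma:
  fixes f :: "'a::real_inner \<Rightarrow> real"
  assumes deriv: "\<And>z. (f has_derivative (\<lambda>v. g z \<bullet> v)) (at z)"
    and lipschitz: "\<And>z w. norm (g z - g w) \<le> L * norm (z - w)"
  shows "f y \<le> f x + g x \<bullet> (y - x) + L / 2 * (norm (y - x))\<^sup>2"
proof -
  define d where "d = y - x"
  have line: "((\<lambda>t. f (x + t *\<^sub>R d)) has_real_derivative g (x + t *\<^sub>R d) \<bullet> d) (at t)" for t
  proof -
    have "((\<lambda>t. x + t *\<^sub>R d) has_derivative (\<lambda>s. s *\<^sub>R d)) (at t)"
      by (auto intro!: derivative_eq_intros)
    from has_derivative_compose[OF this deriv]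
    have "((\<lambda>t. f (x + t *\<^sub>R d)) has_derivative (\<lambda>s. s * (g (x + t *\<^sub>R d) \<bullet> d))) (at t)"
      by simp
    moreover have "(\<lambda>s. s * (g (x + t *\<^sub>R d) \<bullet> d)) = (*) (g (x + t *\<^sub>R d) \<bullet> d)"
      by (auto simp: mult.commute)
    ultimately show ?thesis by (simp add: has_field_derivative_def)
  qed
  have slope: "g (x + t *\<^sub>R d) \<bullet> d - g x \<bullet> d \<le> L * t * (norm d)\<^sup>2" if "0 \<le> t" for t
  proof -
    have "g (x + t *\<^sub>R d) \<bullet> d - g x \<bullet> d \<le> norm (g (x + t *\<^sub>R d) - g x) * norm d"
      by (metis Cauchy_Schwarz_ineq2 abs_le_D1 inner_diff_left)
    also have "\<dots> \<le> L * norm (t *\<^sub>R d) * norm d"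
      using lipschitz[of "x + t *\<^sub>R d" x] by (simp add: mult_right_mono)
    finally show ?thesis using that by (simp add: power2_eq_square)
  qed
  let ?p = "\<lambda>t. f (x + t *\<^sub>R d) - t * (g x \<bullet> d) - L / 2 * t\<^sup>2 * (norm d)\<^sup>2"
  have "(?p has_real_derivative g (x + t *\<^sub>R d) \<bullet> d - g x \<bullet> d - L * t * (norm d)\<^sup>2) (at t)" for t
    by (rule derivative_eq_intros line refl | simp)+
  then have "?p 1 \<le> ?p 0"
    using slope by (intro DERIV_nonpos_imp_nonincreasing[of 0 1 ?p]) force+
  then show ?thesis by (simp add: d_def)
qed

section \<open>Lower semicontinuity and the proximal map\<close>

definition lsc_on :: "'a::metric_space set \<Rightarrow> ('a \<Rightarrow> real) \<Rightarrow> bool" where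
  "lsc_on S \<phi> \<longleftrightarrow> (\<forall>x\<in>S. \<forall>e>0. eventually (\<lambda>y. \<phi> y > \<phi> x - e) (at x within S))"

lemma lsc_onD_ball:
  assumes "lsc_on S \<phi>" "x \<in> S" "e > 0"
  obtains d where "d > 0" "\<And>y. y \<in> S \<Longrightarrow> dist y x < d \<Longrightarrow> \<phi> y > \<phi> x - e"
proof -
  from assms obtain d where "d > 0" "\<forall>y\<in>S. y \<noteq> x \<and> dist y x < d \<longrightarrow> \<phi> y > \<phi> x - e"
    unfolding lsc_on_def eventually_at by blast
  with that \<open>e > 0\<close> show ?thesis by force
qed

lemma lsc_on_add_linear_near:
  fixes \<phi> :: "'a::real_inner \<Rightarrow> real"
  assumes "lsc_on S \<phi>" "x \<in> S" "e > 0"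
  obtains r where "r > 0" "\<And>y. y \<in> S \<Longrightarrow> norm (y - x) < r \<Longrightarrow> \<phi> x - e < \<phi> y + g \<bullet> (y - x)"
proof -
  obtain d where d: "d > 0" "\<And>y. y \<in> S \<Longrightarrow> dist y x < d \<Longrightarrow> \<phi> y > \<phi> x - e / 2"
    using lsc_onD_ball[OF assms(1,2), of "e / 2"] \<open>e > 0\<close> by auto
  define a where "a = norm g + 1"
  have "a > 0" using norm_ge_zero[of g] by (simp add: a_def add_nonneg_pos)
  define r where "r = min d (e / (2 * a))"
  have "\<phi> x - e < \<phi> y + g \<bullet> (y - x)" if "y \<in> S" "norm (y - x) < r" for y
  proof -
    have "\<bar>g \<bullet> (y - x)\<bar> \<le> a * r"
      using Cauchy_Schwarz_ineq2[of g "y - x"] \<open>norm (y - x) < r\<close> unfolding a_def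
      by (smt (verit, best) mult_mono norm_ge_zero)
    also have "\<dots> \<le> a * (e / (2 * a))"
      using \<open>a > 0\<close> by (intro mult_left_mono) (auto simp: r_def)
    finally have "\<bar>g \<bullet> (y - x)\<bar> \<le> e / 2" using \<open>a > 0\<close> by simp
    moreover have "\<phi> y > \<phi> x - e / 2" using d(2) that by (simp add: r_def dist_norm)
    ultimately show ?thesis by linarith
  qed
  moreover have "r > 0" using d \<open>e > 0\<close> \<open>a > 0\<close> by (simp add: r_def)
  ultimately show ?thesis using that by blast
qed

lemma lsc_on_subset: "lsc_on S \<phi> \<Longrightarrow> T \<subseteq> S \<Longrightarrow> lsc_on T \<phi>"
  unfolding lsc_on_def by (meson at_le filter_leD subsetD)

lemma lsc_on_add_continuous:
  assumes "lsc_on S \<phi>" "continuous_on S g"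
  shows "lsc_on S (\<lambda>x. \<phi> x + g x)"
  unfolding lsc_on_def
proof (intro ballI allI impI)
  fix x e assume "x \<in> S" "(e::real) > 0"
  then have "eventually (\<lambda>y. \<phi> y > \<phi> x - e / 2) (at x within S)"
    using assms(1) by (simp add: lsc_on_def)
  moreover have "eventually (\<lambda>y. g y > g x - e / 2) (at x within S)"
    using assms(2) \<open>x \<in> S\<close> \<open>e > 0\<close>
    by (intro order_tendstoD) (auto simp: continuous_on_def)
  ultimately show "eventually (\<lambda>y. \<phi> y + g y > \<phi> x + g x - e) (at x within S)"
    by eventually_elim simp
qed

lemma lsc_on_attains_min:
  fixes \<phi> :: "'a::metric_space \<Rightarrow> real"
  assumes "compact K" "K \<noteq> {}" "lsc_on K \<phi>" "bdd_below (\<phi> ` K)"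
  obtains y where "y \<in> K" "\<And>z. z \<in> K \<Longrightarrow> \<phi> y \<le> \<phi> z"
proof -
  define I where "I = Inf (\<phi> ` K)"
  have "\<exists>y\<in>K. \<phi> y < I + inverse (real (Suc k))" for k
    using cInf_lessD[of "\<phi> ` K" "I + inverse (real (Suc k))"] \<open>K \<noteq> {}\<close> by (auto simp: I_def)
  then obtain Y where Y: "\<And>k. Y k \<in> K" "\<And>k. \<phi> (Y k) < I + inverse (real (Suc k))" by metis
  then obtain l s where l: "l \<in> K" "strict_mono s" "(Y \<circ> s) \<longlonglongrightarrow> l"
    using \<open>compact K\<close> unfolding compact_eq_seq_compact_metric seq_compact_def by metis
  have "\<phi> l \<le> I + e" if "e > 0" for e
  proof -
    obtain d where d: "d > 0" "\<And>y. y \<in> K \<Longrightarrow> dist y l < d \<Longrightarrow> \<phi> y > \<phi> l - e / 2"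
      using lsc_onD_ball[OF assms(3) l(1), of "e / 2"] \<open>e > 0\<close> by auto
    have "eventually (\<lambda>k. dist (Y (s k)) l < d) sequentially"
      using tendstoD[OF l(3) \<open>d > 0\<close>] by simp
    moreover have "eventually (\<lambda>k. inverse (real (Suc (s k))) < e / 2) sequentially"
      using LIMSEQ_subseq_LIMSEQ[OF LIMSEQ_inverse_real_of_nat l(2)] \<open>e > 0\<close>
      by (intro order_tendstoD) (auto simp: comp_def)
    ultimately obtain k where "dist (Y (s k)) l < d" "inverse (real (Suc (s k))) < e / 2"
      using eventually_happens'[OF sequentially_bot] by (metis (mono_tags) eventually_conj)
    then show ?thesis using d(2)[OF Y(1)] Y(2)[of "s k"] by fastforce
  qed
  then have "\<phi> l \<le> I" by (meson field_le_epsilon)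
  moreover have "I \<le> \<phi> z" if "z \<in> K" for z
    unfolding I_def using assms(4) that by (simp add: cInf_lower)
  ultimately show ?thesis using that[OF l(1)] by fastforce
qed

lemma convex_lsc_affine_minorant:
  fixes h :: "'a::real_normed_vector \<Rightarrow> real"
  assumes "convex D" "convex_on D h" "lsc_on D h" "y0 \<in> D"
  obtains c r where "r \<ge> 0" "\<And>y. y \<in> D \<Longrightarrow> c - r * norm (y - y0) \<le> h y"
proof -
  obtain d where d: "d > 0" "\<And>y. y \<in> D \<Longrightarrow> dist y y0 < d \<Longrightarrow> h y > h y0 - 1"
    using lsc_onD_ball[OF assms(3,4), of 1] by auto
  have "h y0 - 1 - 2 / d * norm (y - y0) \<le> h y" if "y \<in> D" for y
  proof (cases "norm (y - y0) < d / 2")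
    case True
    then have "h y > h y0 - 1" using d that by (simp add: dist_norm)
    moreover have "2 / d * norm (y - y0) \<ge> 0" using \<open>d > 0\<close> by simp
    ultimately show ?thesis by linarith
  next
    case False
    \<comment> \<open>Convexity transfers the bound at the point \<open>w\<close> at distance \<open>d/2\<close> on the segment to \<open>y\<close>.\<close>
    define t where "t = d / (2 * norm (y - y0))"
    have "norm (y - y0) > 0" using False \<open>d > 0\<close> by linarith
    then have t: "0 < t" "t \<le> 1" "1 / t = 2 / d * norm (y - y0)"
      using False \<open>d > 0\<close> by (auto simp: t_def field_simps)
    define w where "w = (1 - t) *\<^sub>R y0 + t *\<^sub>R y"
    have "w \<in> D" using assms(1,4) that t unfolding w_def by (simp add: convex_def)
    moreover have "dist w y0 = d / 2"
      using \<open>norm (y - y0) > 0\<close> t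
      by (simp add: w_def dist_norm algebra_simps flip: scaleR_diff_right) (simp add: t_def)
    ultimately have "h w > h y0 - 1" using d \<open>d > 0\<close> by simp
    moreover have "h w \<le> (1 - t) * h y0 + t * h y"
      unfolding w_def using assms(2,4) that t by (intro convex_onD) auto
    ultimately have "h y0 - 1 / t < h y" using t by (simp add: field_simps)
    then show ?thesis using t by simp
  qed
  then show ?thesis using that[of "2 / d" "h y0 - 1"] that[of "h y0 - 1" "2 / d"] \<open>d > 0\<close> by simp
qed

lemma quadratic_eventually_exceeds_linear:
  fixes \<eta> r A :: real
  assumes "\<eta> > 0"
  obtains R where "\<And>t. t > R \<Longrightarrow> A < t\<^sup>2 / (2 * \<eta>) - r * t"
proof
  fix t assume t: "t > 2 * \<eta> * (\<bar>r\<bar> + \<bar>A\<bar> + 1) + 1"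
  have "0 \<le> 2 * \<eta> * (\<bar>r\<bar> + \<bar>A\<bar> + 1)" using assms by simp
  with t have "t > 1" by linarith
  from t have "t / (2 * \<eta>) > \<bar>r\<bar> + \<bar>A\<bar> + 1"
    using assms by (simp add: field_simps)
  then have q: "t / (2 * \<eta>) - r > \<bar>A\<bar>" by linarith
  then have "t / (2 * \<eta>) - r \<le> t * (t / (2 * \<eta>) - r)"
    using \<open>t > 1\<close> mult_right_mono[of 1 t "t / (2 * \<eta>) - r"] by simp
  also have "\<dots> = t\<^sup>2 / (2 * \<eta>) - r * t" by (simp add: power2_eq_square algebra_simps)
  finally show "A < t\<^sup>2 / (2 * \<eta>) - r * t" using q abs_ge_self[of A] by linarith
qed

lemma prox_objective_attains_min:
  fixes h :: "'a::{real_normed_vector,heine_borel} \<Rightarrow> real"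
  assumes "closed D" "convex D" "convex_on D h" "lsc_on D h" "D \<noteq> {}" "\<eta> > 0"
  obtains y where "y \<in> D"
    "\<And>z. z \<in> D \<Longrightarrow> h y + (norm (y - u))\<^sup>2 / (2 * \<eta>) \<le> h z + (norm (z - u))\<^sup>2 / (2 * \<eta>)"
proof -
  define \<phi> where "\<phi> y = h y + (norm (y - u))\<^sup>2 / (2 * \<eta>)" for y
  obtain y0 where "y0 \<in> D" using assms(5) by blast
  obtain c r where "r \<ge> 0" and minorant: "\<And>y. y \<in> D \<Longrightarrow> c - r * norm (y - y0) \<le> h y"
    using convex_lsc_affine_minorant[OF assms(2-4) \<open>y0 \<in> D\<close>] by blast
  have lower: "c - r * norm (u - y0) + ((norm (y - u))\<^sup>2 / (2 * \<eta>) - r * norm (y - u)) \<le> \<phi> y"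
    if "y \<in> D" for y
  proof -
    have "r * norm (y - y0) \<le> r * norm (y - u) + r * norm (u - y0)"
      using \<open>r \<ge> 0\<close> norm_triangle_ineq[of "y - u" "u - y0"] by (simp add: mult_left_mono flip: distrib_left)
    then show ?thesis using minorant[OF that] by (simp add: \<phi>_def)
  qed
  \<comment> \<open>Coercivity: outside a large ball around \<open>u\<close> the objective exceeds its value at \<open>y0\<close>.\<close>
  obtain R0 where R0: "\<And>t. t > R0 \<Longrightarrow> \<phi> y0 - c + r * norm (u - y0) < t\<^sup>2 / (2 * \<eta>) - r * t"
    using quadratic_eventually_exceeds_linear[OF assms(6)] by metis
  define R where "R = max R0 (norm (y0 - u))"
  define K where "K = D \<inter> cball u R"
  have far: "\<phi> y0 < \<phi> z" if "z \<in> D" "z \<notin> K" for z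
  proof -
    have "norm (z - u) > R0" using that by (auto simp: K_def R_def dist_norm norm_minus_commute)
    with R0 lower[OF \<open>z \<in> D\<close>] show ?thesis by fastforce
  qed
  have "compact K" "y0 \<in> K" using assms(1) \<open>y0 \<in> D\<close> by (auto simp: K_def R_def dist_norm norm_minus_commute closed_Int_compact)
  moreover have "lsc_on K \<phi>"
    unfolding \<phi>_def
  proof (rule lsc_on_add_continuous)
    show "lsc_on K h" using assms(4) by (rule lsc_on_subset) (simp add: K_def)
    show "continuous_on K (\<lambda>y. (norm (y - u))\<^sup>2 / (2 * \<eta>))"
      using assms(6) by (intro continuous_intros) auto
  qed
  moreover have "bdd_below (\<phi> ` K)"
  proof (rule bdd_belowI2)
    fix y assume "y \<in> K"
    then have "norm (y - u) \<le> R" by (simp add: K_def dist_norm norm_minus_commute)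
    then have "r * norm (y - u) \<le> r * R" using \<open>r \<ge> 0\<close> by (rule mult_left_mono)
    moreover have "(norm (y - u))\<^sup>2 / (2 * \<eta>) \<ge> 0" using \<open>\<eta> > 0\<close> by simp
    ultimately show "c - r * norm (u - y0) - r * R \<le> \<phi> y"
      using lower[of y] \<open>y \<in> K\<close> unfolding K_def by auto
  qed
  ultimately obtain y where "y \<in> K" "\<And>z. z \<in> K \<Longrightarrow> \<phi> y \<le> \<phi> z"
    using lsc_on_attains_min by blast
  then show ?thesis
    using that[of y] far \<open>y0 \<in> K\<close> by (force simp: \<phi>_def K_def)
qed

locale convex_lsc_regularizer =
  fixes h :: "'a::euclidean_space \<Rightarrow> real" and D :: "'a set"
  assumes closed_D: "closed D" and convex_D: "convex D" and convex_h: "convex_on D h"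
    and lsc_h: "lsc_on D h" and D_nonempty: "D \<noteq> {}"
begin

lemma prox_is_arg_min:
  assumes "\<eta> > 0"
  shows "is_arg_min (\<lambda>y. h y + (norm (y - u))\<^sup>2 / (2 * \<eta>)) (\<lambda>y. y \<in> D) (prox h D \<eta> u)"
proof -
  obtain y where "y \<in> D"
    "\<And>z. z \<in> D \<Longrightarrow> h y + (norm (y - u))\<^sup>2 / (2 * \<eta>) \<le> h z + (norm (z - u))\<^sup>2 / (2 * \<eta>)"
    using prox_objective_attains_min[OF closed_D convex_D convex_h lsc_h D_nonempty assms] by blast
  then have "is_arg_min (\<lambda>y. h y + (norm (y - u))\<^sup>2 / (2 * \<eta>)) (\<lambda>y. y \<in> D) y"
    by (simp add: is_arg_min_linorder)
  then show ?thesis unfolding prox_def arg_min_def by (rule someI)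
qed

lemma prox_in_D: "\<eta> > 0 \<Longrightarrow> prox h D \<eta> u \<in> D"
  using prox_is_arg_min by (simp add: is_arg_min_linorder)

lemma prox_le:
  "\<eta> > 0 \<Longrightarrow> z \<in> D \<Longrightarrow>
    h (prox h D \<eta> u) + (norm (prox h D \<eta> u - u))\<^sup>2 / (2 * \<eta>) \<le> h z + (norm (z - u))\<^sup>2 / (2 * \<eta>)"
  using prox_is_arg_min by (simp add: is_arg_min_linorder)

lemma prox_variational_inequality:
  fixes u :: 'a
  assumes "\<eta> > 0" "z \<in> D"
  defines "y \<equiv> prox h D \<eta> u"
  shows "h y + ((u - y) \<bullet> (z - y)) / \<eta> \<le> h z"
proof -
  have "y \<in> D" using prox_in_D[OF assms(1)] by (simp add: y_def)
  \<comment> \<open>Compare \<open>y\<close> with the points \<open>y + s (z - y)\<close> of the segment and let \<open>s \<rightarrow> 0\<close>.\<close>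
  have "0 \<le> (h z - h y + ((y - u) \<bullet> (z - y)) / \<eta>) + s * ((norm (z - y))\<^sup>2 / (2 * \<eta>))"
    if s: "0 < s" "s \<le> 1" for s
  proof -
    define w where "w = (1 - s) *\<^sub>R y + s *\<^sub>R z"
    have "w \<in> D" using convex_D \<open>y \<in> D\<close> assms(2) s unfolding w_def by (simp add: convex_def)
    then have min: "h y + (norm (y - u))\<^sup>2 / (2 * \<eta>) \<le> h w + (norm (w - u))\<^sup>2 / (2 * \<eta>)"
      using prox_le[OF assms(1)] by (simp add: y_def)
    have hw: "h w \<le> (1 - s) * h y + s * h z"
      unfolding w_def using s \<open>y \<in> D\<close> assms(2) by (intro convex_onD[OF convex_h]) auto
    have "(norm (w - u))\<^sup>2 = (norm ((y - u) + s *\<^sub>R (z - y)))\<^sup>2"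
      by (rule arg_cong[where f = "\<lambda>v. (norm v)\<^sup>2"]) (simp add: w_def algebra_simps)
    also have "\<dots> = (norm (y - u))\<^sup>2 + (2 * s * ((y - u) \<bullet> (z - y)) + s\<^sup>2 * (norm (z - y))\<^sup>2)"
      unfolding norm_add_power2 using s by (simp add: power_mult_distrib)
    finally have "(norm (w - u))\<^sup>2 / (2 * \<eta>)
        = (norm (y - u))\<^sup>2 / (2 * \<eta>) + (2 * s * ((y - u) \<bullet> (z - y)) + s\<^sup>2 * (norm (z - y))\<^sup>2) / (2 * \<eta>)"
      by (simp add: add_divide_distrib)
    then have "0 \<le> s * (h z - h y) + (2 * s * ((y - u) \<bullet> (z - y)) + s\<^sup>2 * (norm (z - y))\<^sup>2) / (2 * \<eta>)"
      using min hw by (simp add: algebra_simps)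
    also have "\<dots> = s * ((h z - h y + ((y - u) \<bullet> (z - y)) / \<eta>) + s * ((norm (z - y))\<^sup>2 / (2 * \<eta>)))"
      using assms(1) by (simp add: field_simps power2_eq_square)
    finally show ?thesis using s by (simp add: zero_le_mult_iff)
  qed
  then have "0 \<le> h z - h y + ((y - u) \<bullet> (z - y)) / \<eta>"
    by (rule nonneg_if_nonneg_add_small_mult[rotated]) (use assms(1) in auto)
  moreover have "(y - u) \<bullet> (z - y) = - ((u - y) \<bullet> (z - y))"
    by (simp flip: inner_minus_left)
  ultimately show ?thesis by simp
qed

lemma prox_three_point:
  fixes x v :: 'a
  assumes "\<eta> > 0" "z \<in> D"
  defines "y \<equiv> prox h D \<eta> (x - \<eta> *\<^sub>R v)"
  shows "h y + v \<bullet> (y - x) + (norm (y - x))\<^sup>2 / (2 * \<eta>)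
         \<le> h z + v \<bullet> (z - x) + (norm (z - x))\<^sup>2 / (2 * \<eta>) - (norm (z - y))\<^sup>2 / (2 * \<eta>)"
proof -
  have "h y + (((x - \<eta> *\<^sub>R v) - y) \<bullet> (z - y)) / \<eta> \<le> h z"
    using prox_variational_inequality[OF assms(1,2)] by (simp add: y_def)
  moreover have "(((x - \<eta> *\<^sub>R v) - y) \<bullet> (z - y)) / \<eta> = ((x - y) \<bullet> (z - y)) / \<eta> - v \<bullet> (z - y)"
    using assms(1) by (simp add: inner_diff_left inner_add_left field_simps)
  moreover have "(norm (z - x))\<^sup>2 - (norm (z - y))\<^sup>2 - (norm (y - x))\<^sup>2 = - 2 * ((x - y) \<bullet> (z - y))"
    using norm_add_power2[of "z - y" "y - x"]
    by (simp add: inner_commute inner_diff_left inner_diff_right)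
  then have "(norm (z - x))\<^sup>2 / (2 * \<eta>) - (norm (z - y))\<^sup>2 / (2 * \<eta>) - (norm (y - x))\<^sup>2 / (2 * \<eta>)
      = - ((x - y) \<bullet> (z - y)) / \<eta>"
    using assms(1) by (simp flip: diff_divide_distrib)
  moreover have "v \<bullet> (z - x) = v \<bullet> (z - y) + v \<bullet> (y - x)" by (simp add: inner_diff_right)
  ultimately show ?thesis by linarith
qed

end

section \<open>Expectations over finitely supported distributions\<close>

abbreviation E :: "'b pmf \<Rightarrow> ('b \<Rightarrow> real) \<Rightarrow> real" where
  "E p f \<equiv> measure_pmf.expectation p f"

lemma expectation_finite_sum:
  "finite (set_pmf p) \<Longrightarrow> E p f = (\<Sum>a\<in>set_pmf p. pmf p a * f a)"
  by (subst integral_measure_pmf[of "set_pmf p"]) auto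

lemma expectation_bind_finite:
  assumes "finite (set_pmf p)" "\<And>x. x \<in> set_pmf p \<Longrightarrow> finite (set_pmf (q x))"
  shows "E (bind_pmf p q) f = E p (\<lambda>x. E (q x) f)"
  using pmf_expectation_bind[OF assms order_refl, where h = f] expectation_finite_sum[OF assms(1)] by simp

lemma expectation_bind_return:
  "E (bind_pmf p (\<lambda>x. return_pmf (g x))) f = E p (\<lambda>x. f (g x))"
  by (simp flip: map_pmf_def)

lemma expectation_cong_finite:
  "finite (set_pmf p) \<Longrightarrow> (\<And>x. x \<in> set_pmf p \<Longrightarrow> f x = g x) \<Longrightarrow> E p f = E p g"
  by (simp add: expectation_finite_sum)

lemma expectation_mono_finite:
  "finite (set_pmf p) \<Longrightarrow> (\<And>x. x \<in> set_pmf p \<Longrightarrow> f x \<le> g x) \<Longrightarrow> E p f \<le> E p g"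
  unfolding expectation_finite_sum by (intro sum_mono mult_left_mono) auto

lemma expectation_add_finite:
  "finite (set_pmf p) \<Longrightarrow> E p (\<lambda>x. f x + g x) = E p f + E p g"
  by (simp add: expectation_finite_sum distrib_left sum.distrib)

lemma expectation_diff_finite:
  "finite (set_pmf p) \<Longrightarrow> E p (\<lambda>x. f x - g x) = E p f - E p g"
  by (simp add: expectation_finite_sum right_diff_distrib sum_subtractf)

lemma expectation_uniform_nth:
  assumes "pts \<noteq> []"
  shows "E (map_pmf (\<lambda>j. pts ! j) (pmf_of_set {..<length pts})) g = sum_list (map g pts) / real (length pts)"
proof -
  have "{..<length pts} \<noteq> {}" using assms by auto
  then show ?thesis by (simp add: integral_pmf_of_set sum_list_sum_nth atLeast0LessThan)
qed

section \<open>Minibatch sampling\<close>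

lemma set_pmf_sample_indices:
  "n \<ge> 1 \<Longrightarrow> set_pmf (sample_indices n b) = {xs. set xs \<subseteq> {..<n} \<and> length xs = b}"
proof -
  assume "n \<ge> 1"
  then have "replicate b 0 \<in> {xs. set xs \<subseteq> {..<n} \<and> length xs = b}" by auto
  then show ?thesis unfolding sample_indices_def
    by (intro set_pmf_of_set) (auto simp: finite_lists_length_eq)
qed

lemma finite_set_pmf_sample_indices: "n \<ge> 1 \<Longrightarrow> finite (set_pmf (sample_indices n b))"
  by (simp add: set_pmf_sample_indices finite_lists_length_eq)

lemma sum_norm_add_power2_centered:
  fixes \<zeta> :: "nat \<Rightarrow> 'a::real_inner"
  assumes "(\<Sum>i<n. \<zeta> i) = 0"
  shows "(\<Sum>i<n. (norm (\<zeta> i + c))\<^sup>2) = (\<Sum>i<n. (norm (\<zeta> i))\<^sup>2) + real n * (norm c)\<^sup>2"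
proof -
  have "(\<Sum>i<n. (norm (\<zeta> i + c))\<^sup>2) = (\<Sum>i<n. (norm (\<zeta> i))\<^sup>2) + real n * (norm c)\<^sup>2 + 2 * ((\<Sum>i<n. \<zeta> i) \<bullet> c)"
    by (simp add: norm_add_power2 sum.distrib sum_distrib_left inner_sum_left)
  with assms show ?thesis by simp
qed

lemma sum_lists_norm_sum_list_power2:
  fixes \<zeta> :: "nat \<Rightarrow> 'a::real_inner"
  assumes "(\<Sum>i<n. \<zeta> i) = 0"
  shows "real n * (\<Sum>xs | set xs \<subseteq> {..<n} \<and> length xs = k. (norm (sum_list (map \<zeta> xs)))\<^sup>2)
         = real k * real n ^ k * (\<Sum>i<n. (norm (\<zeta> i))\<^sup>2)"
proof (induction k)
  case 0
  have "{xs. set xs \<subseteq> {..<n} \<and> length xs = 0} = {[]}" by auto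
  then show ?case by simp
next
  case (Suc k)
  \<comment> \<open>Split off the first index; the cross terms vanish since \<open>\<zeta>\<close> is centered.\<close>
  define W where "W = {xs. set xs \<subseteq> {..<n} \<and> length xs = k}"
  define Q where "Q = (\<Sum>i<n. (norm (\<zeta> i))\<^sup>2)"
  have "(\<Sum>xs | set xs \<subseteq> {..<n} \<and> length xs = Suc k. (norm (sum_list (map \<zeta> xs)))\<^sup>2)
      = (\<Sum>xs\<in>(\<lambda>(xs, i). i # xs) ` (W \<times> {..<n}). (norm (sum_list (map \<zeta> xs)))\<^sup>2)"
    unfolding W_def lists_length_Suc_eq ..
  also have "\<dots> = (\<Sum>xs\<in>W. \<Sum>i<n. (norm (\<zeta> i + sum_list (map \<zeta> xs)))\<^sup>2)"
    by (subst sum.reindex[OF inj_split_Cons]) (simp add: case_prod_unfold sum.cartesian_product)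
  also have "\<dots> = (\<Sum>xs\<in>W. Q + real n * (norm (sum_list (map \<zeta> xs)))\<^sup>2)"
    unfolding Q_def by (intro sum.cong refl sum_norm_add_power2_centered assms)
  also have "\<dots> = real n ^ k * Q + real n * (\<Sum>xs\<in>W. (norm (sum_list (map \<zeta> xs)))\<^sup>2)"
    by (simp add: W_def card_lists_length_eq sum.distrib sum_distrib_left)
  also have "\<dots> = real n ^ k * Q + real k * real n ^ k * Q"
    using Suc.IH by (simp add: W_def Q_def)
  finally show ?case by (simp add: Q_def algebra_simps)
qed

lemma minibatch_variance:
  fixes w :: "nat \<Rightarrow> 'a::real_inner"
  assumes "n \<ge> 1" "b \<ge> 1"
  shows "E (sample_indices n b)
           (\<lambda>I. (norm ((1 / real b) *\<^sub>R sum_list (map w I) - (1 / real n) *\<^sub>R (\<Sum>i<n. w i)))\<^sup>2)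
         \<le> (\<Sum>i<n. (norm (w i))\<^sup>2) / (real b * real n)"
proof -
  define c where "c = (1 / real n) *\<^sub>R (\<Sum>i<n. w i)"
  define \<zeta> where "\<zeta> i = w i - c" for i
  define W where "W = {xs. set xs \<subseteq> {..<n} \<and> length xs = b}"
  have "(\<Sum>i<n. \<zeta> i) = 0"
    using assms(1) by (simp add: \<zeta>_def c_def sum_subtractf sum_constant_scaleR)
  have batch: "(1 / real b) *\<^sub>R sum_list (map w I) - c = (1 / real b) *\<^sub>R sum_list (map \<zeta> I)"
    if "I \<in> W" for I
  proof -
    have "sum_list (map \<zeta> I) = sum_list (map w I) - real (length I) *\<^sub>R c"
      by (induction I) (auto simp: \<zeta>_def algebra_simps)
    then show ?thesis using that assms(2) by (simp add: W_def scaleR_diff_right)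
  qed
  have "replicate b 0 \<in> W" using assms(1) by (auto simp: W_def)
  then have "finite W" "W \<noteq> {}" by (auto simp: W_def finite_lists_length_eq)
  then have "E (sample_indices n b) (\<lambda>I. (norm ((1 / real b) *\<^sub>R sum_list (map w I) - c))\<^sup>2)
      = (\<Sum>I\<in>W. (norm ((1 / real b) *\<^sub>R sum_list (map w I) - c))\<^sup>2) / real (card W)"
    unfolding sample_indices_def W_def[symmetric] by (simp add: integral_pmf_of_set)
  also have "\<dots> = (\<Sum>I\<in>W. (norm (sum_list (map \<zeta> I)))\<^sup>2 / (real b)\<^sup>2) / real n ^ b"
    by (simp add: batch W_def card_lists_length_eq power_divide)
  also have "\<dots> = (\<Sum>I\<in>W. (norm (sum_list (map \<zeta> I)))\<^sup>2) / ((real b)\<^sup>2 * real n ^ b)"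
    by (simp add: sum_divide_distrib)
  also have "\<dots> = (\<Sum>i<n. (norm (\<zeta> i))\<^sup>2) / (real b * real n)"
    using sum_lists_norm_sum_list_power2[OF \<open>(\<Sum>i<n. \<zeta> i) = 0\<close>, of b] assms
    by (simp add: W_def field_simps power2_eq_square)
  also have "\<dots> \<le> (\<Sum>i<n. (norm (w i))\<^sup>2) / (real b * real n)"
    using sum_norm_add_power2_centered[OF \<open>(\<Sum>i<n. \<zeta> i) = 0\<close>, of c]
    by (intro divide_right_mono) (simp_all add: \<zeta>_def)
  finally show ?thesis by (simp add: c_def)
qed

section \<open>Proximal SVRG under the PL condition\<close>

lemma svrg_step_size_condition:
  fixes \<rho> L :: real
  assumes "0 < \<rho>" "0 < L" "b \<ge> 1" "4 * \<rho>\<^sup>2 * (real m)\<^sup>2 / real b + \<rho> \<le> 1" "j < m"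
  shows "\<rho> / L * L\<^sup>2 / real b * (real j * (2 * real j + 1)) \<le> 1 / (2 * (\<rho> / L)) - L / 2"
proof -
  have "real j * (2 * real j + 1) \<le> real m * (2 * real m)"
    using assms(5) by (intro mult_mono) auto
  then have "2 * \<rho>\<^sup>2 * (real j * (2 * real j + 1)) \<le> 2 * \<rho>\<^sup>2 * (real m * (2 * real m))"
    by (intro mult_left_mono) auto
  then have "2 * \<rho>\<^sup>2 * (real j * (2 * real j + 1)) / real b \<le> 4 * \<rho>\<^sup>2 * (real m)\<^sup>2 / real b"
    using assms(3) by (intro divide_right_mono) (auto simp: power2_eq_square)
  then have "2 * \<rho>\<^sup>2 * (real j * (2 * real j + 1)) / real b \<le> 1 - \<rho>"
    using assms(4) by linarith
  then have "L / (2 * \<rho>) * (2 * \<rho>\<^sup>2 * (real j * (2 * real j + 1)) / real b) \<le> L / (2 * \<rho>) * (1 - \<rho>)"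
    using assms(1,2) by (intro mult_left_mono) auto
  moreover have "\<rho> / L * L\<^sup>2 / real b * (real j * (2 * real j + 1))
      = L / (2 * \<rho>) * (2 * \<rho>\<^sup>2 * (real j * (2 * real j + 1)) / real b)"
    using assms(1-3) by (simp add: field_simps power2_eq_square)
  moreover have "L / (2 * \<rho>) * (1 - \<rho>) = 1 / (2 * (\<rho> / L)) - L / 2"
    using assms(1,2) by (simp add: field_simps)
  ultimately show ?thesis by simp
qed

lemma epochs_cover_iterations:
  assumes "m \<ge> 1"
  shows "real T \<le> real (nat \<lceil>real T / real m\<rceil> * m)"
proof -
  have "0 < real m" using assms by simp
  with real_nat_ceiling_ge[of "real T / real m"]
  have "real T \<le> real (nat \<lceil>real T / real m\<rceil>) * real m" by (simp only: pos_divide_le_eq)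
  then show ?thesis by (simp only: of_nat_mult)
qed

locale prox_svrg_setting = convex_lsc_regularizer h D for h :: "'a::euclidean_space \<Rightarrow> real" and D +
  fixes n :: nat and fs :: "nat \<Rightarrow> 'a \<Rightarrow> real" and gf :: "nat \<Rightarrow> 'a \<Rightarrow> 'a" and L :: real
  assumes n_pos: "n \<ge> 1"
    and has_derivative_fs: "\<And>i x. i < n \<Longrightarrow> (fs i has_derivative (\<lambda>v. gf i x \<bullet> v)) (at x)"
    and L_pos: "L > 0"
    and lipschitz_gf: "\<And>i x y. i < n \<Longrightarrow> norm (gf i x - gf i y) \<le> L * norm (x - y)"
begin

abbreviation f where "f \<equiv> avg_fun n fs"

abbreviation grad_f where "grad_f \<equiv> avg_grad n gf"

abbreviation F where "F x \<equiv> f x + h x"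

lemma has_derivative_f: "(f has_derivative (\<lambda>v. grad_f x \<bullet> v)) (at x)"
proof -
  have "((\<lambda>x. (1 / real n) * (\<Sum>i<n. fs i x)) has_derivative (\<lambda>v. (1 / real n) * (\<Sum>i<n. gf i x \<bullet> v))) (at x)"
    by (intro has_derivative_mult_right has_derivative_sum has_derivative_fs) simp
  then show ?thesis unfolding avg_fun_def[abs_def] avg_grad_def by (simp add: inner_sum_left)
qed

lemma lipschitz_grad_f: "norm (grad_f x - grad_f y) \<le> L * norm (x - y)"
proof -
  have "norm (grad_f x - grad_f y) = (1 / real n) * norm (\<Sum>i<n. gf i x - gf i y)"
    by (simp add: avg_grad_def sum_subtractf flip: scaleR_diff_right)
  also have "\<dots> \<le> (1 / real n) * (\<Sum>i<n. L * norm (x - y))"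
    by (intro mult_left_mono order_trans[OF norm_sum sum_mono] lipschitz_gf) auto
  also have "\<dots> = L * norm (x - y)" using n_pos by simp
  finally show ?thesis .
qed

lemma f_descent: "f y \<le> f x + grad_f x \<bullet> (y - x) + L / 2 * (norm (y - x))\<^sup>2"
  using descent_lemma[OF has_derivative_f lipschitz_grad_f] .

lemma finite_sample [simp]: "finite (set_pmf (sample_indices n b))"
  using finite_set_pmf_sample_indices[OF n_pos] .

definition prox_grad_point :: "real \<Rightarrow> 'a \<Rightarrow> 'a" where
  "prox_grad_point \<eta> x = prox h D \<eta> (x - \<eta> *\<^sub>R grad_f x)"

text \<open>\<open>model_gap \<eta> x\<close> is \<open>G\<^sub>\<eta>(x)\<close>: the value \<open>h x\<close> of the proximal-linear model at \<open>x\<close> minus its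
  minimum, which is attained at \<open>prox_grad_point \<eta> x\<close>.\<close>

definition model_gap :: "real \<Rightarrow> 'a \<Rightarrow> real" where
  "model_gap \<eta> x = h x - h (prox_grad_point \<eta> x) - grad_f x \<bullet> (prox_grad_point \<eta> x - x)
     - (norm (prox_grad_point \<eta> x - x))\<^sup>2 / (2 * \<eta>)"

lemma model_gap_nonneg:
  assumes "\<eta> > 0" "x \<in> D"
  shows "0 \<le> model_gap \<eta> x"
proof -
  have "(norm (x - prox_grad_point \<eta> x))\<^sup>2 / (2 * \<eta>) \<ge> 0" using assms(1) by simp
  then show ?thesis
    using prox_three_point[OF assms, of x "grad_f x"]
    unfolding model_gap_def prox_grad_point_def by simp
qed

lemma prox_step_descent:
  fixes v :: 'a
  assumes "\<eta> > 0" "x \<in> D"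
  defines "y \<equiv> prox h D \<eta> (x - \<eta> *\<^sub>R v)"
  shows "F y \<le> F x - model_gap \<eta> x + \<eta> / 2 * (norm (v - grad_f x))\<^sup>2
           - (1 / (2 * \<eta>) - L / 2) * (norm (y - x))\<^sup>2"
proof -
  define p where "p = prox_grad_point \<eta> x"
  have "p \<in> D" unfolding p_def prox_grad_point_def by (rule prox_in_D[OF assms(1)])
  \<comment> \<open>Compare the step along \<open>v\<close> with the exact proximal-gradient point \<open>p\<close>.\<close>
  have "h y + v \<bullet> (y - x) + (norm (y - x))\<^sup>2 / (2 * \<eta>)
         \<le> h p + v \<bullet> (p - x) + (norm (p - x))\<^sup>2 / (2 * \<eta>) - (norm (p - y))\<^sup>2 / (2 * \<eta>)"
    unfolding y_def by (rule prox_three_point[OF assms(1) \<open>p \<in> D\<close>])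
  moreover have "(v - grad_f x) \<bullet> (p - y) \<le> \<eta> / 2 * (norm (v - grad_f x))\<^sup>2 + (norm (p - y))\<^sup>2 / (2 * \<eta>)"
    by (rule young_inner[OF assms(1)])
  moreover have "grad_f x \<bullet> (y - x) - v \<bullet> (y - x) + v \<bullet> (p - x) = grad_f x \<bullet> (p - x) + (v - grad_f x) \<bullet> (p - y)"
    by (simp add: inner_diff_left inner_diff_right)
  moreover have "(1 / (2 * \<eta>) - L / 2) * (norm (y - x))\<^sup>2 = (norm (y - x))\<^sup>2 / (2 * \<eta>) - L / 2 * (norm (y - x))\<^sup>2"
    by (simp add: algebra_simps)
  ultimately show ?thesis
    using f_descent[of y x] unfolding model_gap_def p_def by linarith
qed

lemma svrg_step_expected_descent:
  assumes "\<eta> > 0" "x \<in> D" "b \<ge> 1"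
  shows "E (sample_indices n b) (\<lambda>I. F (svrg_step n gf h D b \<eta> xt (grad_f xt) x I)
             + (1 / (2 * \<eta>) - L / 2) * (norm (svrg_step n gf h D b \<eta> xt (grad_f xt) x I - x))\<^sup>2)
         \<le> F x - model_gap \<eta> x + \<eta> * L\<^sup>2 / (2 * real b) * (norm (x - xt))\<^sup>2"
proof -
  define v where "v I = (1 / real b) *\<^sub>R sum_list (map (\<lambda>i. gf i x - gf i xt) I) + grad_f xt" for I
  have "E (sample_indices n b) (\<lambda>I. F (svrg_step n gf h D b \<eta> xt (grad_f xt) x I)
             + (1 / (2 * \<eta>) - L / 2) * (norm (svrg_step n gf h D b \<eta> xt (grad_f xt) x I - x))\<^sup>2)
      \<le> E (sample_indices n b) (\<lambda>I. (F x - model_gap \<eta> x) + \<eta> / 2 * (norm (v I - grad_f x))\<^sup>2)"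
  proof (rule expectation_mono_finite[OF finite_sample])
    fix I
    show "F (svrg_step n gf h D b \<eta> xt (grad_f xt) x I)
             + (1 / (2 * \<eta>) - L / 2) * (norm (svrg_step n gf h D b \<eta> xt (grad_f xt) x I - x))\<^sup>2
          \<le> (F x - model_gap \<eta> x) + \<eta> / 2 * (norm (v I - grad_f x))\<^sup>2"
      using prox_step_descent[OF assms(1,2), of "v I"] unfolding svrg_step_def Let_def v_def by simp
  qed
  also have "\<dots> = (F x - model_gap \<eta> x) + \<eta> / 2 * E (sample_indices n b) (\<lambda>I. (norm (v I - grad_f x))\<^sup>2)"
    by (simp add: expectation_add_finite)
  also have "\<dots> \<le> (F x - model_gap \<eta> x) + \<eta> / 2 * (L\<^sup>2 / real b * (norm (x - xt))\<^sup>2)"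
  proof -
    \<comment> \<open>\<open>v I - grad_f x\<close> is the centered minibatch mean of the differences \<open>gf i x - gf i xt\<close>.\<close>
    have "v I - grad_f x = (1 / real b) *\<^sub>R sum_list (map (\<lambda>i. gf i x - gf i xt) I)
        - (1 / real n) *\<^sub>R (\<Sum>i<n. gf i x - gf i xt)" for I
      by (simp add: v_def avg_grad_def sum_subtractf scaleR_diff_right)
    then have "E (sample_indices n b) (\<lambda>I. (norm (v I - grad_f x))\<^sup>2)
        \<le> (\<Sum>i<n. (norm (gf i x - gf i xt))\<^sup>2) / (real b * real n)"
      using minibatch_variance[OF n_pos assms(3)] by simp
    also have "\<dots> \<le> (\<Sum>i<n. (L * norm (x - xt))\<^sup>2) / (real b * real n)"
      using lipschitz_gf by (intro divide_right_mono sum_mono power_mono) auto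
    also have "\<dots> = L\<^sup>2 / real b * (norm (x - xt))\<^sup>2"
      using n_pos by (simp add: power_mult_distrib)
    finally show ?thesis using assms(1) by (intro add_left_mono mult_left_mono) auto
  qed
  finally show ?thesis by simp
qed

lemma svrg_step_in_D: "\<eta> > 0 \<Longrightarrow> svrg_step n gf h D b \<eta> xt g x I \<in> D"
  unfolding svrg_step_def Let_def by (rule prox_in_D)

lemma finite_svrg_inner [simp]: "finite (set_pmf (svrg_inner n gf h D b \<eta> xt g k x))"
  by (induction k arbitrary: x) auto

lemma length_svrg_inner: "xs \<in> set_pmf (svrg_inner n gf h D b \<eta> xt g k x) \<Longrightarrow> length xs = Suc k"
  by (induction k arbitrary: x xs) auto

lemma set_svrg_inner_subset:
  assumes "\<eta> > 0"
  shows "x \<in> D \<Longrightarrow> xs \<in> set_pmf (svrg_inner n gf h D b \<eta> xt g k x) \<Longrightarrow> set xs \<subseteq> D"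
proof (induction k arbitrary: x xs)
  case (Suc k)
  then show ?case using svrg_step_in_D[OF assms] by fastforce
qed simp

lemma last_svrg_inner_in_D:
  "\<eta> > 0 \<Longrightarrow> x \<in> D \<Longrightarrow> xs \<in> set_pmf (svrg_inner n gf h D b \<eta> xt g k x) \<Longrightarrow> last xs \<in> D"
  by (metis set_svrg_inner_subset length_svrg_inner Zero_not_Suc last_in_set list.size(3) subsetD)

lemma expectation_svrg_inner_Suc:
  "E (svrg_inner n gf h D b \<eta> xt g (Suc k) x) (\<lambda>xs. \<Psi> (last xs) + sum_list (map G (take (Suc k) xs)))
   = E (sample_indices n b) (\<lambda>I. E (svrg_inner n gf h D b \<eta> xt g k (svrg_step n gf h D b \<eta> xt g x I))
       (\<lambda>xs. \<Psi> (last xs) + sum_list (map G (take k xs))) + G x)"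
proof -
  have "E (svrg_inner n gf h D b \<eta> xt g k y) (\<lambda>xs. \<Psi> (last (x # xs)) + sum_list (map G (take (Suc k) (x # xs))))
      = E (svrg_inner n gf h D b \<eta> xt g k y) (\<lambda>xs. \<Psi> (last xs) + sum_list (map G (take k xs))) + G x" for y
  proof -
    have "E (svrg_inner n gf h D b \<eta> xt g k y) (\<lambda>xs. \<Psi> (last (x # xs)) + sum_list (map G (take (Suc k) (x # xs))))
        = E (svrg_inner n gf h D b \<eta> xt g k y) (\<lambda>xs. (\<Psi> (last xs) + sum_list (map G (take k xs))) + G x)"
      by (intro expectation_cong_finite) (auto dest: length_svrg_inner)
    then show ?thesis by (simp add: expectation_add_finite)
  qed
  then show ?thesis by (simp add: expectation_bind_finite expectation_bind_return)
qed

lemma svrg_inner_expected_telescope: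
  assumes "\<eta> > 0" "b \<ge> 1"
    and step_size: "\<And>j. j < k \<Longrightarrow> \<eta> * L\<^sup>2 / real b * (real j * (2 * real j + 1)) \<le> 1 / (2 * \<eta>) - L / 2"
    and "x \<in> D"
  shows "E (svrg_inner n gf h D b \<eta> xt (grad_f xt) k x)
           (\<lambda>xs. F (last xs) + sum_list (map (model_gap \<eta>) (take k xs)))
         \<le> F x + \<eta> * L\<^sup>2 / real b * real k * (norm (x - xt))\<^sup>2"
  using step_size \<open>x \<in> D\<close>
proof (induction k arbitrary: x)
  case (Suc k)
  define a where "a = \<eta> * L\<^sup>2 / (2 * real b)"
  define A where "A = 1 / (2 * \<eta>) - L / 2"
  define Y where "Y I = svrg_step n gf h D b \<eta> xt (grad_f xt) x I" for I
  define \<Phi> where "\<Phi> = (\<lambda>xs. F (last xs) + sum_list (map (model_gap \<eta>) (take k xs)))"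
  have "a \<ge> 0" using assms by (simp add: a_def)
  have IH: "E (svrg_inner n gf h D b \<eta> xt (grad_f xt) k (Y I)) \<Phi> \<le> F (Y I) + 2 * a * real k * (norm (Y I - xt))\<^sup>2" for I
    using Suc.IH[of "Y I"] Suc.prems(1) svrg_step_in_D[OF assms(1)] assms(2)
    by (simp add: Y_def \<Phi>_def a_def)
  \<comment> \<open>The drift of \<open>Y I\<close> away from the snapshot \<open>xt\<close> is paid for by the term \<open>A \<parallel>Y I - x\<parallel>\<^sup>2\<close> of the one-step bound.\<close>
  have drift: "2 * a * real k * (norm (Y I - xt))\<^sup>2 \<le> A * (norm (Y I - x))\<^sup>2 + a * (2 * real k + 1) * (norm (x - xt))\<^sup>2" for I
  proof -
    have "2 * a * (real k * (2 * real k + 1)) \<le> A"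
      using Suc.prems(1)[of k] assms(2) by (simp add: a_def A_def)
    moreover have "2 * real k * (norm (Y I - xt))\<^sup>2
        \<le> 2 * real k * (2 * real k + 1) * (norm (Y I - x))\<^sup>2 + (2 * real k + 1) * (norm (x - xt))\<^sup>2"
      using norm_add_power2_weighted_le[of k "Y I - x" "x - xt"] by simp
    ultimately show ?thesis
      using \<open>a \<ge> 0\<close> mult_left_mono[of _ _ a] mult_right_mono[of _ A "(norm (Y I - x))\<^sup>2"]
      by (fastforce simp: algebra_simps)
  qed
  have "E (svrg_inner n gf h D b \<eta> xt (grad_f xt) (Suc k) x)
          (\<lambda>xs. F (last xs) + sum_list (map (model_gap \<eta>) (take (Suc k) xs)))
      = E (sample_indices n b) (\<lambda>I. E (svrg_inner n gf h D b \<eta> xt (grad_f xt) k (Y I)) \<Phi> + model_gap \<eta> x)"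
    unfolding Y_def \<Phi>_def by (rule expectation_svrg_inner_Suc[where \<Psi> = "\<lambda>y. F y"])
  also have "\<dots> \<le> E (sample_indices n b) (\<lambda>I. (F (Y I) + A * (norm (Y I - x))\<^sup>2)
                    + (a * (2 * real k + 1) * (norm (x - xt))\<^sup>2 + model_gap \<eta> x))"
    using IH drift by (intro expectation_mono_finite) (fastforce intro: order_trans)+
  also have "\<dots> \<le> (F x - model_gap \<eta> x + a * (norm (x - xt))\<^sup>2) + (a * (2 * real k + 1) * (norm (x - xt))\<^sup>2 + model_gap \<eta> x)"
    using svrg_step_expected_descent[OF assms(1) Suc.prems(2) assms(2), of xt]
    by (simp add: expectation_add_finite Y_def A_def a_def)
  also have "\<dots> = F x + \<eta> * L\<^sup>2 / real b * real (Suc k) * (norm (x - xt))\<^sup>2"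
    using assms(2) by (simp add: a_def field_simps)
  finally show ?case .
qed simp

lemma finite_svrg_outer [simp]: "finite (set_pmf (svrg_outer n gf h D b \<eta> m s x))"
  by (induction s arbitrary: x) auto

lemma set_pmf_svrg_outer:
  assumes "\<eta> > 0"
  shows "x \<in> D \<Longrightarrow> pts \<in> set_pmf (svrg_outer n gf h D b \<eta> m s x) \<Longrightarrow> length pts = s * m \<and> set pts \<subseteq> D"
proof (induction s arbitrary: x pts)
  case (Suc s)
  then obtain xs rest where xs: "xs \<in> set_pmf (svrg_inner n gf h D b \<eta> x (grad_f x) m x)"
    and "rest \<in> set_pmf (svrg_outer n gf h D b \<eta> m s (last xs))" and "pts = take m xs @ rest"
    by auto
  moreover have "length xs = Suc m" "set (take m xs) \<subseteq> D"
    using length_svrg_inner[OF xs] set_svrg_inner_subset[OF assms Suc.prems(1) xs]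
    by (auto dest: in_set_takeD)
  ultimately show ?case
    using Suc.IH last_svrg_inner_in_D[OF assms Suc.prems(1) xs] by fastforce
qed simp

lemma svrg_outer_expected_gap_sum:
  assumes "\<eta> > 0" "b \<ge> 1"
    and step_size: "\<And>j. j < m \<Longrightarrow> \<eta> * L\<^sup>2 / real b * (real j * (2 * real j + 1)) \<le> 1 / (2 * \<eta>) - L / 2"
    and xstar_min: "\<And>y. y \<in> D \<Longrightarrow> F xstar \<le> F y"
  shows "x \<in> D \<Longrightarrow> E (svrg_outer n gf h D b \<eta> m s x) (\<lambda>pts. sum_list (map (model_gap \<eta>) pts)) \<le> F x - F xstar"
proof (induction s arbitrary: x)
  case 0
  then show ?case using xstar_min by simp
next
  case (Suc s)
  define inner where "inner = svrg_inner n gf h D b \<eta> x (grad_f x) m x"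
  have "E (svrg_outer n gf h D b \<eta> m (Suc s) x) (\<lambda>pts. sum_list (map (model_gap \<eta>) pts))
      = E inner (\<lambda>xs. sum_list (map (model_gap \<eta>) (take m xs))
          + E (svrg_outer n gf h D b \<eta> m s (last xs)) (\<lambda>rest. sum_list (map (model_gap \<eta>) rest)))"
    by (simp add: inner_def expectation_bind_finite expectation_bind_return expectation_add_finite)
  also have "\<dots> \<le> E inner (\<lambda>xs. F (last xs) + sum_list (map (model_gap \<eta>) (take m xs)) - F xstar)"
    using Suc.IH last_svrg_inner_in_D[OF assms(1) Suc.prems]
    by (intro expectation_mono_finite) (fastforce simp: inner_def)+
  also have "\<dots> \<le> F x - F xstar"
    using svrg_inner_expected_telescope[OF assms(1,2) step_size Suc.prems, where xt = x]
    by (simp add: inner_def expectation_diff_finite)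
  finally show ?case .
qed

lemma PL_imp_suboptimality_le_model_gap:
  assumes "\<eta> > 0" "\<mu> \<le> 1 / \<eta>" "is_PL \<mu> f grad_f h D xstar" "x \<in> D"
  shows "\<mu> * (F x - F xstar) \<le> model_gap \<eta> x / \<eta>"
proof -
  have "\<mu> > 0" using assms(3) by (simp add: is_PL_def)
  define t where "t = \<mu> * \<eta>"
  have t: "0 < t" "t \<le> 1" using \<open>\<mu> > 0\<close> assms(1,2) by (auto simp: t_def field_simps)
  \<comment> \<open>Evaluating the three-point inequality at \<open>x + t (y - x)\<close> bounds the infimum in \<open>Dh\<close> by \<open>- model_gap / t\<close>.\<close>
  have "- model_gap \<eta> x / t \<le> grad_f x \<bullet> (y - x) + \<mu> / 2 * (norm (y - x))\<^sup>2 + h y - h x"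
    if "y \<in> D" for y
  proof -
    define z where "z = (1 - t) *\<^sub>R x + t *\<^sub>R y"
    have "z \<in> D" using convex_D assms(4) that t unfolding z_def by (simp add: convex_def)
    have "z - x = t *\<^sub>R (y - x)" by (simp add: z_def algebra_simps)
    have "h z \<le> (1 - t) * h x + t * h y"
      unfolding z_def using t assms(4) that by (intro convex_onD[OF convex_h]) auto
    moreover have "(norm (z - x))\<^sup>2 = t\<^sup>2 * (norm (y - x))\<^sup>2"
      using t unfolding \<open>z - x = t *\<^sub>R (y - x)\<close> by (simp add: power_mult_distrib)
    then have "(norm (z - x))\<^sup>2 / (2 * \<eta>) = t * (\<mu> / 2 * (norm (y - x))\<^sup>2)"
      using assms(1) by (simp add: t_def power2_eq_square field_simps)
    moreover have "- model_gap \<eta> x \<le> h z - h x + grad_f x \<bullet> (z - x) + (norm (z - x))\<^sup>2 / (2 * \<eta>)"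
      using prox_three_point[OF assms(1) \<open>z \<in> D\<close>, of x "grad_f x"] assms(1)
      unfolding model_gap_def prox_grad_point_def
      by (smt (verit, best) divide_nonneg_pos zero_le_power2)
    ultimately have "- model_gap \<eta> x \<le> t * (grad_f x \<bullet> (y - x) + \<mu> / 2 * (norm (y - x))\<^sup>2 + h y - h x)"
      unfolding \<open>z - x = t *\<^sub>R (y - x)\<close> by (simp add: algebra_simps)
    then show ?thesis using t by (simp add: field_simps)
  qed
  then have "- model_gap \<eta> x / t \<le> (INF y\<in>D. grad_f x \<bullet> (y - x) + \<mu> / 2 * (norm (y - x))\<^sup>2 + h y - h x)"
    using D_nonempty by (intro cINF_greatest) auto
  then have "2 * \<mu> * (- model_gap \<eta> x / t)
      \<le> 2 * \<mu> * (INF y\<in>D. grad_f x \<bullet> (y - x) + \<mu> / 2 * (norm (y - x))\<^sup>2 + h y - h x)"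
    using \<open>\<mu> > 0\<close> by (intro mult_left_mono) auto
  then have "Dh grad_f h D x \<mu> \<le> 2 * \<mu> * (model_gap \<eta> x / t)"
    unfolding Dh_def by linarith
  moreover have "\<mu> * (F x - F xstar) \<le> 1 / 2 * Dh grad_f h D x \<mu>"
    using assms(3,4) by (simp add: is_PL_def)
  ultimately show ?thesis using \<open>\<mu> > 0\<close> assms(1) by (simp add: t_def)
qed

lemma PL_large_modulus_imp_optimal:
  assumes PL: "is_PL \<mu> f grad_f h D xstar" and "\<mu> > L"
    and xstar_min: "\<And>y. y \<in> D \<Longrightarrow> F xstar \<le> F y" and "x \<in> D"
  shows "F x = F xstar"
proof (rule ccontr)
  assume "F x \<noteq> F xstar"
  define \<delta> where "\<delta> = F x - F xstar"
  have "\<delta> > 0" using xstar_min[OF \<open>x \<in> D\<close>] \<open>F x \<noteq> F xstar\<close> by (simp add: \<delta>_def)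
  have "\<mu> > 0" using PL by (simp add: is_PL_def)
  define \<psi> where "\<psi> y = grad_f x \<bullet> (y - x) + \<mu> / 2 * (norm (y - x))\<^sup>2 + h y - h x" for y
  have "\<mu> * \<delta> \<le> \<mu> * - (INF y\<in>D. \<psi> y)"
    using PL \<open>x \<in> D\<close> by (simp add: is_PL_def Dh_def \<delta>_def \<psi>_def)
  then have "\<delta> \<le> - (INF y\<in>D. \<psi> y)" using \<open>\<mu> > 0\<close> by (rule mult_left_le_imp_le)
  then have inf_le: "(INF y\<in>D. \<psi> y) \<le> - \<delta>" by linarith
  \<comment> \<open>Near-minimizers of \<open>\<psi>\<close> lie close to \<open>x\<close> (as \<open>\<mu> > L\<close>), where lower semicontinuity keeps \<open>\<psi>\<close> above \<open>-\<delta>/2\<close>.\<close>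
  have "\<delta> / 2 > 0" using \<open>\<delta> > 0\<close> by simp
  then obtain r where "r > 0"
    and near: "\<And>y. y \<in> D \<Longrightarrow> norm (y - x) < r \<Longrightarrow> h x - \<delta> / 2 < h y + grad_f x \<bullet> (y - x)"
    using lsc_on_add_linear_near[OF lsc_h \<open>x \<in> D\<close>, where g = "grad_f x"] by blast
  define \<epsilon> where "\<epsilon> = min (\<delta> / 2) ((\<mu> - L) / 2 * r\<^sup>2)"
  have "\<epsilon> > 0" using \<open>\<delta> > 0\<close> \<open>\<mu> > L\<close> \<open>r > 0\<close> by (simp add: \<epsilon>_def)
  then obtain y where "y \<in> D" "\<psi> y < - \<delta> + \<epsilon>"
    using cInf_lessD[of "\<psi> ` D" "- \<delta> + \<epsilon>"] inf_le D_nonempty by fastforce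
  have "(\<mu> - L) / 2 * (norm (y - x))\<^sup>2 = \<mu> / 2 * (norm (y - x))\<^sup>2 - L / 2 * (norm (y - x))\<^sup>2"
    by (simp add: field_simps)
  then have "F y - F x + (\<mu> - L) / 2 * (norm (y - x))\<^sup>2 \<le> \<psi> y"
    using f_descent[of y x] unfolding \<psi>_def by linarith
  then have "(\<mu> - L) / 2 * (norm (y - x))\<^sup>2 < (\<mu> - L) / 2 * r\<^sup>2"
    using \<open>\<psi> y < - \<delta> + \<epsilon>\<close> xstar_min[OF \<open>y \<in> D\<close>] by (simp add: \<delta>_def \<epsilon>_def)
  then have "norm (y - x) < r"
    using \<open>\<mu> > L\<close> \<open>r > 0\<close> by (simp add: power_less_imp_less_base)
  moreover have "\<mu> / 2 * (norm (y - x))\<^sup>2 \<ge> 0" using \<open>\<mu> > 0\<close> by simp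
  ultimately have "\<psi> y > - \<delta> / 2" using near[OF \<open>y \<in> D\<close>] unfolding \<psi>_def by linarith
  moreover have "\<epsilon> \<le> \<delta> / 2" by (simp add: \<epsilon>_def)
  ultimately show False using \<open>\<psi> y < - \<delta> + \<epsilon>\<close> by linarith
qed

lemma suboptimality_le_model_gap:
  assumes "\<eta> > 0" "\<eta> * L \<le> 1" "is_PL \<mu> f grad_f h D xstar"
    and xstar_min: "\<And>y. y \<in> D \<Longrightarrow> F xstar \<le> F y" and "x \<in> D"
  shows "F x - F xstar \<le> model_gap \<eta> x / (\<eta> * \<mu>)"
proof (cases "\<mu> \<le> 1 / \<eta>")
  case True
  have "\<mu> > 0" using assms(3) by (simp add: is_PL_def)
  then show ?thesis
    using PL_imp_suboptimality_le_model_gap[OF assms(1) True assms(3,5)] assms(1)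
    by (simp add: field_simps)
next
  case False
  then have "1 < \<eta> * \<mu>" using assms(1) by (simp add: field_simps)
  then have "\<eta> * L < \<eta> * \<mu>" using assms(2) by (simp add: mult.commute)
  then have "\<mu> > L" using assms(1) by (simp add: mult_less_cancel_left_pos)
  then show ?thesis
    using PL_large_modulus_imp_optimal[OF assms(3) _ xstar_min \<open>x \<in> D\<close>]
      model_gap_nonneg[OF assms(1,5)] assms(1) False
    by (simp add: field_simps)
qed

lemma ProxSVRG_support:
  assumes "\<eta> > 0" "y \<in> D" "nat \<lceil>real T / real m\<rceil> * m \<ge> 1"
  shows "finite (set_pmf (ProxSVRG n gf h D y T m b \<eta>))" "set_pmf (ProxSVRG n gf h D y T m b \<eta>) \<subseteq> D"
proof -
  have "pts \<noteq> [] \<and> set pts \<subseteq> D" if "pts \<in> set_pmf (svrg_outer n gf h D b \<eta> m (nat \<lceil>real T / real m\<rceil>) y)" for pts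
    using set_pmf_svrg_outer[OF assms(1,2) that] assms(3) by auto
  then show "finite (set_pmf (ProxSVRG n gf h D y T m b \<eta>))" "set_pmf (ProxSVRG n gf h D y T m b \<eta>) \<subseteq> D"
    by (auto simp: ProxSVRG_def lessThan_empty_iff) (meson nth_mem subsetD)
qed

lemma ProxSVRG_expected_suboptimality:
  assumes "\<eta> > 0" "b \<ge> 1"
    and step_size: "\<And>j. j < m \<Longrightarrow> \<eta> * L\<^sup>2 / real b * (real j * (2 * real j + 1)) \<le> 1 / (2 * \<eta>) - L / 2"
    and xstar_min: "\<And>y. y \<in> D \<Longrightarrow> F xstar \<le> F y"
    and "c \<ge> 0" and gap: "\<And>x. x \<in> D \<Longrightarrow> F x - F xstar \<le> c * model_gap \<eta> x"
    and "nat \<lceil>real T / real m\<rceil> * m \<ge> 1" and "y \<in> D"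
  shows "E (ProxSVRG n gf h D y T m b \<eta>) (\<lambda>x. F x - F xstar)
           \<le> c * (F y - F xstar) / real (nat \<lceil>real T / real m\<rceil> * m)"
proof -
  define N where "N = nat \<lceil>real T / real m\<rceil> * m"
  define outer where "outer = svrg_outer n gf h D b \<eta> m (nat \<lceil>real T / real m\<rceil>) y"
  have pts: "length pts = N" "set pts \<subseteq> D" if "pts \<in> set_pmf outer" for pts
    using set_pmf_svrg_outer[OF assms(1) \<open>y \<in> D\<close>] that by (auto simp: outer_def N_def)
  have "pts \<noteq> []" if "pts \<in> set_pmf outer" for pts
    using pts(1)[OF that] assms(7) by (auto simp: N_def)
  then have "E (ProxSVRG n gf h D y T m b \<eta>) (\<lambda>x. F x - F xstar)
      = E outer (\<lambda>pts. E (map_pmf (\<lambda>j. pts ! j) (pmf_of_set {..<length pts})) (\<lambda>x. F x - F xstar))"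
    unfolding ProxSVRG_def outer_def[symmetric]
    by (intro expectation_bind_finite) (auto simp: outer_def lessThan_empty_iff)
  also have "\<dots> = E outer (\<lambda>pts. sum_list (map (\<lambda>x. F x - F xstar) pts) / real N)"
  proof (rule expectation_cong_finite)
    fix pts assume "pts \<in> set_pmf outer"
    then have "pts \<noteq> []" "length pts = N"
      using pts(1) \<open>\<And>pts. pts \<in> set_pmf outer \<Longrightarrow> pts \<noteq> []\<close> by blast+
    then show "E (map_pmf (\<lambda>j. pts ! j) (pmf_of_set {..<length pts})) (\<lambda>x. F x - F xstar)
        = sum_list (map (\<lambda>x. F x - F xstar) pts) / real N"
      using expectation_uniform_nth[of pts "\<lambda>x. F x - F xstar"] by simp
  qed (simp add: outer_def)
  also have "\<dots> \<le> E outer (\<lambda>pts. c / real N * sum_list (map (model_gap \<eta>) pts))"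
  proof (rule expectation_mono_finite)
    fix pts assume "pts \<in> set_pmf outer"
    then have "sum_list (map (\<lambda>x. F x - F xstar) pts) \<le> sum_list (map (\<lambda>x. c * model_gap \<eta> x) pts)"
      using pts(2) gap by (intro sum_list_mono) auto
    then show "sum_list (map (\<lambda>x. F x - F xstar) pts) / real N \<le> c / real N * sum_list (map (model_gap \<eta>) pts)"
      by (simp add: sum_list_const_mult divide_right_mono)
  qed (simp add: outer_def)
  also have "\<dots> \<le> c / real N * (F y - F xstar)"
    using svrg_outer_expected_gap_sum[where m = m, OF assms(1,2) step_size xstar_min \<open>y \<in> D\<close>] \<open>c \<ge> 0\<close>
    by (simp add: outer_def divide_right_mono mult_left_mono)
  finally show ?thesis by (simp add: N_def)
qed

lemma ProxSVRG_halves_suboptimality: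
  assumes "\<eta> > 0" "\<eta> * L \<le> 1" "b \<ge> 1" "m \<ge> 1"
    and step_size: "\<And>j. j < m \<Longrightarrow> \<eta> * L\<^sup>2 / real b * (real j * (2 * real j + 1)) \<le> 1 / (2 * \<eta>) - L / 2"
    and PL: "is_PL \<mu> f grad_f h D xstar" and xstar_min: "\<And>y. y \<in> D \<Longrightarrow> F xstar \<le> F y"
    and T: "6 / (\<eta> * \<mu>) \<le> real T" and "y \<in> D"
  shows "E (ProxSVRG n gf h D y T m b \<eta>) (\<lambda>x. F x - F xstar) \<le> (F y - F xstar) / 2"
proof -
  define c where "c = 1 / (\<eta> * \<mu>)"
  have "c > 0" using assms(1) PL by (simp add: c_def is_PL_def)
  define N where "N = nat \<lceil>real T / real m\<rceil> * m"
  have "6 * c \<le> real N"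
    using T epochs_cover_iterations[OF \<open>m \<ge> 1\<close>, of T] by (simp add: c_def N_def)
  then have "N \<ge> 1" "c / real N \<le> 1 / 2" using \<open>c > 0\<close> by (auto simp: field_simps)
  have "F x - F xstar \<le> c * model_gap \<eta> x" if "x \<in> D" for x
    using suboptimality_le_model_gap[OF assms(1,2) PL xstar_min that] by (simp add: c_def)
  then have "E (ProxSVRG n gf h D y T m b \<eta>) (\<lambda>x. F x - F xstar) \<le> c * (F y - F xstar) / real N"
    using ProxSVRG_expected_suboptimality[where m = m and T = T and c = c,
        OF assms(1,3) step_size xstar_min _ _ _ \<open>y \<in> D\<close>] \<open>c > 0\<close> \<open>N \<ge> 1\<close>
    by (simp add: N_def)
  also have "\<dots> = c / real N * (F y - F xstar)" by simp
  also have "\<dots> \<le> 1 / 2 * (F y - F xstar)"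
    using \<open>c / real N \<le> 1 / 2\<close> xstar_min[OF \<open>y \<in> D\<close>] by (intro mult_right_mono) auto
  finally show ?thesis by simp
qed

lemma PL_SVRG_support:
  assumes "\<eta> > 0" "nat \<lceil>real T / real m\<rceil> * m \<ge> 1" "x0 \<in> D"
  shows "finite (set_pmf (PL_SVRG n gf h D x0 k T m b \<eta>)) \<and> set_pmf (PL_SVRG n gf h D x0 k T m b \<eta>) \<subseteq> D"
  by (induction k) (use assms ProxSVRG_support[OF assms(1) _ assms(2)] in fastforce)+

lemma PL_SVRG_expected_suboptimality:
  assumes "\<eta> > 0" "nat \<lceil>real T / real m\<rceil> * m \<ge> 1" "x0 \<in> D"
    and halving: "\<And>y. y \<in> D \<Longrightarrow> E (ProxSVRG n gf h D y T m b \<eta>) (\<lambda>x. F x - F xstar) \<le> (F y - F xstar) / 2"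
  shows "E (PL_SVRG n gf h D x0 k T m b \<eta>) (\<lambda>x. F x - F xstar) \<le> (F x0 - F xstar) / 2 ^ k"
proof (induction k)
  case (Suc k)
  define P where "P = PL_SVRG n gf h D x0 k T m b \<eta>"
  have "finite (set_pmf P)" "set_pmf P \<subseteq> D"
    using PL_SVRG_support[OF assms(1-3)] by (auto simp: P_def)
  then have "E (PL_SVRG n gf h D x0 (Suc k) T m b \<eta>) (\<lambda>x. F x - F xstar)
      = E P (\<lambda>y. E (ProxSVRG n gf h D y T m b \<eta>) (\<lambda>x. F x - F xstar))"
    using ProxSVRG_support[OF assms(1) _ assms(2)] by (auto simp: P_def intro!: expectation_bind_finite)
  also have "\<dots> \<le> E P (\<lambda>y. (F y - F xstar) / 2)"
    using \<open>finite (set_pmf P)\<close> \<open>set_pmf P \<subseteq> D\<close> halving by (intro expectation_mono_finite) auto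
  also have "\<dots> = E P (\<lambda>y. F y - F xstar) / 2" by simp
  also have "\<dots> \<le> (F x0 - F xstar) / 2 ^ k / 2"
    by (rule divide_right_mono[OF Suc.IH[folded P_def]]) simp
  also have "\<dots> = (F x0 - F xstar) / 2 ^ Suc k" by simp
  finally show ?case .
qed (simp add: assms)

end

theorem theorem8:
  fixes n b m K :: nat
    and L \<mu> \<rho> :: real
    and fs :: "nat \<Rightarrow> 'a::euclidean_space \<Rightarrow> real"
    and gf :: "nat \<Rightarrow> 'a \<Rightarrow> 'a"
    and h :: "'a \<Rightarrow> real" and D :: "'a set"
    and xstar x0 :: 'a
  assumes n_pos: "n \<ge> 1"
    and grad: "\<And>i x. i < n \<Longrightarrow> (fs i has_derivative (\<lambda>v. gf i x \<bullet> v)) (at x)"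
    and L_pos: "L > 0"
    and smooth: "\<And>i x y. i < n \<Longrightarrow> norm (gf i x - gf i y) \<le> L * norm (x - y)"
    and D_nonempty: "D \<noteq> {}"
    and D_closed: "closed D"
    and D_convex: "convex D"
    and h_convex: "convex_on D h"
    and h_lsc: "\<And>x e. x \<in> D \<Longrightarrow> e > 0 \<Longrightarrow> eventually (\<lambda>y. h y > h x - e) (at x within D)"
    and xstar_in: "xstar \<in> D"
    and xstar_min: "\<And>x. x \<in> D \<Longrightarrow> avg_fun n fs xstar + h xstar \<le> avg_fun n fs x + h x"
    and PL: "is_PL \<mu> (avg_fun n fs) (avg_grad n gf) h D xstar"
    and b_pos: "b \<ge> 1" and b_le: "b \<le> n"
    and m_pos: "m \<ge> 1"
    and rho_pos: "0 < \<rho>" and rho_le: "\<rho> \<le> 1/5"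
    and rho_cond: "4 * \<rho>^2 * (real m)^2 / real b + \<rho> \<le> 1"
    and K_pos: "K \<ge> 1"
    and x0_in: "x0 \<in> D"
  shows "measure_pmf.expectation
           (PL_SVRG n gf h D x0 K (nat \<lceil>6 * L / (\<rho> * \<mu>)\<rceil>) m b (\<rho> / L))
           (\<lambda>x. (avg_fun n fs x + h x) - (avg_fun n fs xstar + h xstar))
         \<le> ((avg_fun n fs x0 + h x0) - (avg_fun n fs xstar + h xstar)) / 2 ^ K"
proof -
  interpret prox_svrg_setting h D n fs gf L
    using assms by unfold_locales (auto simp: lsc_on_def)
  define T where "T = nat \<lceil>6 * L / (\<rho> * \<mu>)\<rceil>"
  have "\<rho> / L > 0" "\<rho> / L * L \<le> 1" using rho_pos rho_le L_pos by auto
  have T: "6 / (\<rho> / L * \<mu>) \<le> real T"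
    using real_nat_ceiling_ge[of "6 * L / (\<rho> * \<mu>)"] by (simp add: T_def field_simps)
  moreover have "0 < 6 / (\<rho> / L * \<mu>)" using rho_pos L_pos PL by (simp add: is_PL_def)
  ultimately have "0 < real (nat \<lceil>real T / real m\<rceil> * m)"
    using epochs_cover_iterations[OF m_pos, of T] by linarith
  then have epochs: "nat \<lceil>real T / real m\<rceil> * m \<ge> 1" unfolding of_nat_0_less_iff by linarith
  have halving: "E (ProxSVRG n gf h D y T m b (\<rho> / L)) (\<lambda>x. F x - F xstar) \<le> (F y - F xstar) / 2"
    if "y \<in> D" for y
    using ProxSVRG_halves_suboptimality[OF \<open>\<rho> / L > 0\<close> \<open>\<rho> / L * L \<le> 1\<close> b_pos m_pos
        svrg_step_size_condition[OF rho_pos L_pos b_pos rho_cond] PL xstar_min T that] .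
  from PL_SVRG_expected_suboptimality[OF \<open>\<rho> / L > 0\<close> epochs x0_in halving]
  show ?thesis by (simp add: T_def)
qed

end
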